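(* Let $\phi(x,y,z)=\alpha x+\beta y+\gamma z$ with $\alpha,\beta,\gamma\in\mathbb{R}$ not all zero, and let $S\subset\mathbb{R}^3$ be a surface of Riemann type foliated by circles (or arcs of circles) lying in parallel planes, all orthogonal to a nonzero vector $\vec w\in\mathbb{R}^3$. If $S$ is $\phi$-minimal, then $\vec w$ is proportional to the $\phi$-density vector $\vec v=(\alpha,\beta,\gamma)$, and $S$ is a surface of revolution whose axis is parallel to $\vec v$.
   Context: For a smooth oriented surface $S\subset\mathbb{R}^3$ with unit normal $N$, $H$ denotes its mean curvature normalized so that the mean curvature vector is $\Delta_S X=2HN$ (for a graph $z=u(x,y)$ with upward normal, $2H=\operatorname{div}(\nabla u/\sqrt{1+|\nabla u|^2})$). For $\phi(x,y,z)=\alpha x+\beta y+\gamma z$, the $\phi$-density vector is $\vec v=(\alpha,\beta,\gamma)$ and the $\phi$-mean curvature is $H_\phi=H-\tfrac12\langle N,\vec v\rangle$; $S$ is $\phi$-minimal if $H_\phi\equiv0$. A surface of Riemann type is a surface generated by a smooth one-parameter family of circles (or arcs of circles) all lying in parallel planes; e.g. if the planes are parallel to the $xy$-plane, locally $X(s,t)=(a(s),b(s),s)+r(s)(\cos t,\sin t,0)$ with $a,b,r$ smooth, $r>0$, $t$ in an interval. The result is local. *)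

theory Defs
  imports "HOL-Analysis.Analysis"
begin

definition smooth_on :: "real set \<Rightarrow> (real \<Rightarrow> real) \<Rightarrow> bool" where
  "smooth_on I f \<longleftrightarrow> (\<forall>n. \<forall>x\<in>I. ((deriv ^^ n) f) differentiable (at x))"

definition Xs :: "(real \<Rightarrow> real \<Rightarrow> real^3) \<Rightarrow> real \<Rightarrow> real \<Rightarrow> real^3" where
  "Xs X s t = vector_derivative (\<lambda>\<sigma>. X \<sigma> t) (at s)"
definition Xt :: "(real \<Rightarrow> real \<Rightarrow> real^3) \<Rightarrow> real \<Rightarrow> real \<Rightarrow> real^3" where
  "Xt X s t = vector_derivative (\<lambda>\<tau>. X s \<tau>) (at t)"
definition Xss :: "(real \<Rightarrow> real \<Rightarrow> real^3) \<Rightarrow> real \<Rightarrow> real \<Rightarrow> real^3" where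
  "Xss X s t = vector_derivative (\<lambda>\<sigma>. Xs X \<sigma> t) (at s)"
definition Xst :: "(real \<Rightarrow> real \<Rightarrow> real^3) \<Rightarrow> real \<Rightarrow> real \<Rightarrow> real^3" where
  "Xst X s t = vector_derivative (\<lambda>\<tau>. Xs X s \<tau>) (at t)"
definition Xtt :: "(real \<Rightarrow> real \<Rightarrow> real^3) \<Rightarrow> real \<Rightarrow> real \<Rightarrow> real^3" where
  "Xtt X s t = vector_derivative (\<lambda>\<tau>. Xt X s \<tau>) (at t)"

definition unit_normal :: "(real \<Rightarrow> real \<Rightarrow> real^3) \<Rightarrow> real \<Rightarrow> real \<Rightarrow> real^3" where
  "unit_normal X s t = (1 / norm (cross3 (Xs X s t) (Xt X s t))) *\<^sub>R cross3 (Xs X s t) (Xt X s t)"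

text \<open>Mean curvature, normalized so that the mean curvature vector is 2 H N:
  H = (eG - 2fF + gE) / (2(EG - F^2)).\<close>
definition mean_curv :: "(real \<Rightarrow> real \<Rightarrow> real^3) \<Rightarrow> real \<Rightarrow> real \<Rightarrow> real" where
  "mean_curv X s t =
    (let E = Xs X s t \<bullet> Xs X s t; F = Xs X s t \<bullet> Xt X s t; G = Xt X s t \<bullet> Xt X s t;
         N = unit_normal X s t;
         e = Xss X s t \<bullet> N; f = Xst X s t \<bullet> N; g = Xtt X s t \<bullet> N
     in (e * G - 2 * f * F + g * E) / (2 * (E * G - F\<^sup>2)))"

definition phi_mean_curv :: "real^3 \<Rightarrow> (real \<Rightarrow> real \<Rightarrow> real^3) \<Rightarrow> real \<Rightarrow> real \<Rightarrow> real" where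
  "phi_mean_curv v X s t = mean_curv X s t - (1/2) * (unit_normal X s t \<bullet> v)"

definition phi_minimal :: "real^3 \<Rightarrow> (real \<Rightarrow> real \<Rightarrow> real^3) \<Rightarrow> real set \<Rightarrow> real set \<Rightarrow> bool" where
  "phi_minimal v X I J \<longleftrightarrow> (\<forall>s\<in>I. \<forall>t\<in>J. phi_mean_curv v X s t = 0)"

definition regular_param :: "(real \<Rightarrow> real \<Rightarrow> real^3) \<Rightarrow> real set \<Rightarrow> real set \<Rightarrow> bool" where
  "regular_param X I J \<longleftrightarrow> (\<forall>s\<in>I. \<forall>t\<in>J. cross3 (Xs X s t) (Xt X s t) \<noteq> 0)"

text \<open>Surface of Riemann type with circles in planes orthogonal to w (local form):
  with an orthonormal frame e1, e2, w/|w|,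
  X(s,t) = a(s) e1 + b(s) e2 + s w/|w| + r(s)(cos t e1 + sin t e2).\<close>
definition riemann_param ::
  "real^3 \<Rightarrow> real^3 \<Rightarrow> real^3 \<Rightarrow> (real \<Rightarrow> real) \<Rightarrow> (real \<Rightarrow> real) \<Rightarrow> (real \<Rightarrow> real) \<Rightarrow> real \<Rightarrow> real \<Rightarrow> real^3" where
  "riemann_param w e1 e2 a b r s t =
     a s *\<^sub>R e1 + b s *\<^sub>R e2 + s *\<^sub>R ((1 / norm w) *\<^sub>R w) + r s *\<^sub>R (cos t *\<^sub>R e1 + sin t *\<^sub>R e2)"

definition surface_of_revolution ::
  "(real \<Rightarrow> real \<Rightarrow> real^3) \<Rightarrow> real set \<Rightarrow> real set \<Rightarrow> real^3 \<Rightarrow> real^3 \<Rightarrow> bool" where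
  "surface_of_revolution X I J p d \<longleftrightarrow> d \<noteq> 0 \<and>
     (\<forall>s\<in>I. \<exists>\<mu> \<rho>. \<forall>t\<in>J. (X s t - (p + \<mu> *\<^sub>R d)) \<bullet> d = 0
                        \<and> norm (X s t - (p + \<mu> *\<^sub>R d)) = \<rho>)"

end

theory Submission
  imports Defs "HOL-Complex_Analysis.Conformal_Mappings"
begin

(* Write the surface in an orthonormal frame e1, e2, e3 (e3 = w/|w|) as
     X(s,t) = (a s + r s cos t) e1 + (b s + r s sin t) e2 + s e3.
   With n = X_s x X_t, phi-minimality says  <X_ss,n> G - 2 <X_st,n> F + <X_tt,n> E = |n|^2 <n,v>.
   For the circle surface this equation, divided by r^2, is a polynomial identity
   circle_poly(..., cos t, sin t) = 0 whose coefficients involve a, b, r, their first two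
   derivatives and the frame coordinates (al, be, ga) of v.  It holds for t in an interval,
   hence (identity theorem for holomorphic functions) on the whole unit circle.
   Evaluating at eight points of the circle gives: if the centre (a, b) moves at s, then
   al = ga a', be = ga b', ga r' = 0 and 1 + a'^2 + b'^2 + r'^2 = r r''; a continuity argument
   shows this is impossible, so a' = b' = 0 everywhere.  Then the remaining relations give
   al = be = 0, i.e. v is parallel to e3 (hence to w), and the circles are centred on the
   line through the fixed centre in direction v: a surface of revolution. *)

unbundle cross3_syntax

text \<open>phi-minimality in terms of the unnormalised normal n = X_s \<times> X_t: since
  EG - F^2 = |n|^2, the condition H = <N,v>/2 becomes a polynomial identity.\<close>
lemma phi_mean_curv_zero_cross:
  fixes X :: "real \<Rightarrow> real \<Rightarrow> real^3" and s t :: real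
  defines "n \<equiv> Xs X s t \<times> Xt X s t"
  assumes n_nz: "n \<noteq> 0" and zero: "phi_mean_curv v X s t = 0"
  shows "(Xss X s t \<bullet> n) * (Xt X s t \<bullet> Xt X s t) - 2 * (Xst X s t \<bullet> n) * (Xs X s t \<bullet> Xt X s t)
           + (Xtt X s t \<bullet> n) * (Xs X s t \<bullet> Xs X s t) = (n \<bullet> n) * (n \<bullet> v)"
proof -
  let ?E = "Xs X s t \<bullet> Xs X s t" and ?F = "Xs X s t \<bullet> Xt X s t" and ?G = "Xt X s t \<bullet> Xt X s t"
  let ?num = "(Xss X s t \<bullet> n) * ?G - 2 * (Xst X s t \<bullet> n) * ?F + (Xtt X s t \<bullet> n) * ?E"
  have gram: "?E * ?G - ?F\<^sup>2 = n \<bullet> n"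
    unfolding n_def dot_cross by (simp add: power2_eq_square inner_commute)
  define q where "q = sqrt (n \<bullet> n)"
  have q_pos: "q > 0" using n_nz by (simp add: q_def)
  have nn: "n \<bullet> n = q * q" by (simp add: q_def)
  have N: "unit_normal X s t = (1 / q) *\<^sub>R n"
    unfolding unit_normal_def n_def[symmetric] q_def norm_eq_sqrt_inner ..
  have "mean_curv X s t = ?num / (2 * q * (q * q))"
    unfolding mean_curv_def Let_def N gram nn using q_pos by (simp add: field_simps)
  moreover have "unit_normal X s t \<bullet> v = (n \<bullet> v) / q"
    unfolding N by simp
  ultimately have "?num / (2 * q * (q * q)) = (n \<bullet> v) / (2 * q)"
    using zero unfolding phi_mean_curv_def by simp
  then have "?num = (2 * q * (q * q)) * ((n \<bullet> v) / (2 * q))"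
    using q_pos by (simp add: divide_eq_eq)
  also have "\<dots> = (n \<bullet> n) * (n \<bullet> v)" unfolding nn using q_pos by simp
  finally show ?thesis .
qed

definition frame_vec :: "real^3 \<Rightarrow> real^3 \<Rightarrow> real^3 \<Rightarrow> real \<Rightarrow> real \<Rightarrow> real \<Rightarrow> real^3" where
  "frame_vec e1 e2 e3 x y z = x *\<^sub>R e1 + y *\<^sub>R e2 + z *\<^sub>R e3"

locale orthonormal_frame =
  fixes e1 e2 e3 :: "real^3"
  assumes n1: "e1 \<bullet> e1 = 1" and n2: "e2 \<bullet> e2 = 1" and n3: "e3 \<bullet> e3 = 1"
    and o12: "e1 \<bullet> e2 = 0" and o13: "e1 \<bullet> e3 = 0" and o23: "e2 \<bullet> e3 = 0"
begin

lemma o21: "e2 \<bullet> e1 = 0" and o31: "e3 \<bullet> e1 = 0" and o32: "e3 \<bullet> e2 = 0"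
  using o12 o13 o23 by (simp_all add: inner_commute)

abbreviation fv where "fv \<equiv> frame_vec e1 e2 e3"

lemma frame_inner: "fv a b c \<bullet> fv d e f = a*d + b*e + c*f"
  by (simp add: frame_vec_def inner_add_left inner_add_right n1 n2 n3 o12 o13 o23 o21 o31 o32)

lemma frame_norm: "norm (fv a b c) = sqrt (a*a + b*b + c*c)"
  by (simp add: norm_eq_sqrt_inner frame_inner)

lemma orth_parallel_cross:
  assumes "z \<bullet> e1 = 0" "z \<bullet> e2 = 0"
  shows "z = ((e1 \<times> e2) \<bullet> z) *\<^sub>R (e1 \<times> e2)"
proof -
  have unit: "(e1 \<times> e2) \<bullet> (e1 \<times> e2) = 1" using dot_cross[of e1 e2 e1 e2] n1 n2 o12 o21 by simp
  have "z \<times> (e1 \<times> e2) = 0" using assms Lagrange[of z e1 e2] by (simp add: inner_commute)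
  then have "(e1 \<times> e2) \<times> ((e1 \<times> e2) \<times> z) = 0"
    by (metis cross_skew cross_zero_right neg_equal_0_iff_equal)
  then show ?thesis using Lagrange[of "e1 \<times> e2" "e1 \<times> e2" z] unit by simp
qed

lemma frame_expansion: "x = fv (x \<bullet> e1) (x \<bullet> e2) (x \<bullet> e3)"
proof -
  define y where "y = x - fv (x \<bullet> e1) (x \<bullet> e2) (x \<bullet> e3)"
  have y: "y \<bullet> e1 = 0" "y \<bullet> e2 = 0" "y \<bullet> e3 = 0"
    by (simp_all add: y_def frame_vec_def inner_diff_left inner_add_left n1 n2 n3 o12 o13 o23 o21 o31 o32)
  let ?m = "e1 \<times> e2"
  have unit: "?m \<bullet> ?m = 1" using dot_cross[of e1 e2 e1 e2] n1 n2 o12 o21 by simp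
  have ym: "y = (?m \<bullet> y) *\<^sub>R ?m" and em: "e3 = (?m \<bullet> e3) *\<^sub>R ?m"
    using orth_parallel_cross y o31 o32 by blast+
  have "e3 \<bullet> e3 = (?m \<bullet> e3) * (?m \<bullet> e3)"
    by (subst (1 2) em) (simp add: unit)
  then have ne: "?m \<bullet> e3 \<noteq> 0" using n3 by auto
  have "y \<bullet> e3 = (?m \<bullet> y) * (?m \<bullet> e3)"
    by (subst ym, subst em) (simp add: unit)
  then have "?m \<bullet> y = 0" using y(3) ne by simp
  then have "y = 0" using ym by simp
  then show ?thesis by (simp add: y_def)
qed

text \<open>The orientation sign of the frame; it is +1 or -1.\<close>
definition orient where "orient = (e1 \<times> e2) \<bullet> e3"

lemma cross_basis:
  "e1 \<times> e2 = orient *\<^sub>R e3" "e2 \<times> e3 = orient *\<^sub>R e1" "e3 \<times> e1 = orient *\<^sub>R e2"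
proof -
  have "e1 \<bullet> (e2 \<times> e3) = orient" "e2 \<bullet> (e3 \<times> e1) = orient"
    using cross_triple[of e1 e2 e3] cross_triple[of e3 e1 e2] by (simp_all add: orient_def inner_commute)
  then show "e1 \<times> e2 = orient *\<^sub>R e3" "e2 \<times> e3 = orient *\<^sub>R e1" "e3 \<times> e1 = orient *\<^sub>R e2"
    using frame_expansion[of "e1 \<times> e2"] frame_expansion[of "e2 \<times> e3"] frame_expansion[of "e3 \<times> e1"]
    by (simp_all add: frame_vec_def orient_def dot_cross_self inner_commute)
qed

lemma orient_sq: "orient * orient = 1"
proof -
  have "(e1 \<times> e2) \<bullet> (e1 \<times> e2) = 1" using dot_cross[of e1 e2 e1 e2] n1 n2 o12 o21 by simp
  then show ?thesis by (simp add: cross_basis n3)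
qed

lemma frame_cross:
  "fv a b c \<times> fv d e f = orient *\<^sub>R fv (b*f - c*e) (c*d - a*f) (a*e - b*d)"
proof -
  have "e2 \<times> e1 = - (orient *\<^sub>R e3)" "e3 \<times> e2 = - (orient *\<^sub>R e1)" "e1 \<times> e3 = - (orient *\<^sub>R e2)"
    using cross_basis cross_skew by metis+
  then show ?thesis
    by (simp add: frame_vec_def cross_add_left cross_add_right cross_mult_left cross_mult_right cross_basis
        algebra_simps)
qed

end

lemma frame_vec_has_vector_derivative:
  assumes "(f has_real_derivative f') (at x)" "(g has_real_derivative g') (at x)"
    "(h has_real_derivative h') (at x)"
  shows "((\<lambda>x. frame_vec e1 e2 e3 (f x) (g x) (h x)) has_vector_derivative frame_vec e1 e2 e3 f' g' h') (at x)"
proof -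
  have "((\<lambda>x. f x *\<^sub>R e1 + g x *\<^sub>R e2 + h x *\<^sub>R e3) has_vector_derivative
     ((f x *\<^sub>R 0 + f' *\<^sub>R e1) + (g x *\<^sub>R 0 + g' *\<^sub>R e2) + (h x *\<^sub>R 0 + h' *\<^sub>R e3))) (at x)"
    by (intro has_vector_derivative_add has_vector_derivative_scaleR assms has_vector_derivative_const)
  then show ?thesis by (simp add: frame_vec_def)
qed

lemma smooth_on_deriv:
  assumes "smooth_on I f" "x \<in> I"
  shows "(f has_real_derivative deriv f x) (at x)"
    and "(deriv f has_real_derivative deriv (deriv f) x) (at x)"
proof -
  have "((deriv ^^ 0) f) differentiable (at x)" "((deriv ^^ 1) f) differentiable (at x)"
    using assms unfolding smooth_on_def by blast+
  then show "(f has_real_derivative deriv f x) (at x)"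
    and "(deriv f has_real_derivative deriv (deriv f) x) (at x)"
    by (simp_all add: DERIV_deriv_iff_real_differentiable)
qed

definition circle_surface ::
  "real^3 \<Rightarrow> real^3 \<Rightarrow> real^3 \<Rightarrow> (real \<Rightarrow> real) \<Rightarrow> (real \<Rightarrow> real) \<Rightarrow> (real \<Rightarrow> real) \<Rightarrow> real \<Rightarrow> real \<Rightarrow> real^3"
  where "circle_surface e1 e2 e3 a b r s t = frame_vec e1 e2 e3 (a s + r s * cos t) (b s + r s * sin t) s"

lemma circle_surface_Xt:
  "Xt (circle_surface e1 e2 e3 a b r) s t = frame_vec e1 e2 e3 (-(r s * sin t)) (r s * cos t) 0"
  unfolding Xt_def circle_surface_def
  by (rule vector_derivative_at, rule frame_vec_has_vector_derivative) (auto intro!: derivative_eq_intros)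

lemma circle_surface_Xtt:
  "Xtt (circle_surface e1 e2 e3 a b r) s t = frame_vec e1 e2 e3 (-(r s * cos t)) (-(r s * sin t)) 0"
  unfolding Xtt_def circle_surface_Xt
  by (rule vector_derivative_at, rule frame_vec_has_vector_derivative) (auto intro!: derivative_eq_intros)

context
  fixes a b r :: "real \<Rightarrow> real" and I :: "real set"
  assumes I: "open I" and sa: "smooth_on I a" and sb: "smooth_on I b" and sr: "smooth_on I r"
begin

lemma circle_surface_Xs:
  assumes "s \<in> I"
  shows "Xs (circle_surface e1 e2 e3 a b r) s t
           = frame_vec e1 e2 e3 (deriv a s + deriv r s * cos t) (deriv b s + deriv r s * sin t) 1"
  unfolding Xs_def circle_surface_def
  by (rule vector_derivative_at, rule frame_vec_has_vector_derivative)
     (auto intro!: derivative_eq_intros smooth_on_deriv[OF sa] smooth_on_deriv[OF sb] smooth_on_deriv[OF sr]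
       simp: assms)

lemma circle_surface_Xst:
  assumes s: "s \<in> I"
  shows "Xst (circle_surface e1 e2 e3 a b r) s t = frame_vec e1 e2 e3 (-(deriv r s * sin t)) (deriv r s * cos t) 0"
proof -
  have "Xs (circle_surface e1 e2 e3 a b r) s
          = (\<lambda>t. frame_vec e1 e2 e3 (deriv a s + deriv r s * cos t) (deriv b s + deriv r s * sin t) 1)"
    using circle_surface_Xs[OF s] by (simp add: fun_eq_iff)
  then show ?thesis unfolding Xst_def
    by (simp only:) (rule vector_derivative_at, rule frame_vec_has_vector_derivative,
        auto intro!: derivative_eq_intros)
qed

text \<open>X_s is given by the formula above only on the open set I, so X_ss is computed
  by transforming the derivative within I.\<close>
lemma circle_surface_Xss:
  assumes s: "s \<in> I"
  shows "Xss (circle_surface e1 e2 e3 a b r) s t = frame_vec e1 e2 e3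
    (deriv (deriv a) s + deriv (deriv r) s * cos t) (deriv (deriv b) s + deriv (deriv r) s * sin t) 0"
  unfolding Xss_def
proof (rule vector_derivative_at, rule has_vector_derivative_transform_within_open[OF _ I s])
  show "((\<lambda>\<sigma>. frame_vec e1 e2 e3 (deriv a \<sigma> + deriv r \<sigma> * cos t) (deriv b \<sigma> + deriv r \<sigma> * sin t) 1)
     has_vector_derivative frame_vec e1 e2 e3 (deriv (deriv a) s + deriv (deriv r) s * cos t)
       (deriv (deriv b) s + deriv (deriv r) s * sin t) 0) (at s)"
    by (rule frame_vec_has_vector_derivative)
      (auto intro!: derivative_eq_intros smooth_on_deriv[OF sa s] smooth_on_deriv[OF sb s] smooth_on_deriv[OF sr s])
  show "frame_vec e1 e2 e3 (deriv a y + deriv r y * cos t) (deriv b y + deriv r y * sin t) 1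
          = Xs (circle_surface e1 e2 e3 a b r) y t" if "y \<in> I" for y
    using that by (simp add: circle_surface_Xs)
qed

end

text \<open>The minimality equation of a circle surface at the point with angle t, divided by
  r^2 and written as a polynomial in c = cos t and y = sin t.  The coefficients are
  r, r', r'', a', b', a'', b'' and the frame coordinates al, be, ga of the density vector.
  It is defined over any commutative ring so that it extends to complex arguments.\<close>
definition circle_poly :: "'a::comm_ring_1 \<Rightarrow> 'a \<Rightarrow> 'a \<Rightarrow> 'a \<Rightarrow> 'a \<Rightarrow> 'a \<Rightarrow> 'a \<Rightarrow> 'a \<Rightarrow> 'a \<Rightarrow> 'a \<Rightarrow> 'a \<Rightarrow> 'a \<Rightarrow> 'a" where
 "circle_poly r r1 r2 p q p2 q2 al be ga c y =
   1 + p^2 + q^2 + r1^2 + 2*r1*(p*c + q*y) - r*r2 - r*(p2*c + q2*y)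
   - r*(1 + (p*c + q*y + r1)^2)*(ga*(p*c + q*y + r1) - al*c - be*y)"

text \<open>Reduction of phi-minimality of the circle surface to the vanishing of circle_poly:
  in frame coordinates the coordinate-free equation equals orient r^2 circle_poly.\<close>
lemma (in orthonormal_frame) circle_surface_phi_minimal_poly:
  assumes I: "open I" and sm: "smooth_on I a" "smooth_on I b" "smooth_on I r" and s: "s \<in> I"
    and r_nz: "r s \<noteq> 0"
    and reg: "Xs (circle_surface e1 e2 e3 a b r) s t \<times> Xt (circle_surface e1 e2 e3 a b r) s t \<noteq> 0"
    and zero: "phi_mean_curv v (circle_surface e1 e2 e3 a b r) s t = 0"
  shows "circle_poly (r s) (deriv r s) (deriv (deriv r) s) (deriv a s) (deriv b s)
           (deriv (deriv a) s) (deriv (deriv b) s) (v \<bullet> e1) (v \<bullet> e2) (v \<bullet> e3) (cos t) (sin t) = 0"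
proof -
  let ?X = "circle_surface e1 e2 e3 a b r"
  define al be ga where "al = v \<bullet> e1" and "be = v \<bullet> e2" and "ga = v \<bullet> e3"
  have v: "v = fv al be ga" unfolding al_def be_def ga_def by (rule frame_expansion)
  note derivs = circle_surface_Xs[OF I sm s] circle_surface_Xt circle_surface_Xst[OF I sm s]
    circle_surface_Xss[OF I sm s] circle_surface_Xtt
  have "(Xss ?X s t \<bullet> (Xs ?X s t \<times> Xt ?X s t)) * (Xt ?X s t \<bullet> Xt ?X s t)
        - 2 * (Xst ?X s t \<bullet> (Xs ?X s t \<times> Xt ?X s t)) * (Xs ?X s t \<bullet> Xt ?X s t)
        + (Xtt ?X s t \<bullet> (Xs ?X s t \<times> Xt ?X s t)) * (Xs ?X s t \<bullet> Xs ?X s t)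
      = ((Xs ?X s t \<times> Xt ?X s t) \<bullet> (Xs ?X s t \<times> Xt ?X s t)) * ((Xs ?X s t \<times> Xt ?X s t) \<bullet> v)"
    by (rule phi_mean_curv_zero_cross[OF reg zero])
  note eq = this[unfolded derivs frame_cross inner_scaleR_left inner_scaleR_right,
      unfolded v frame_inner]
  define p q r1 p2 q2 r2 c y where "p = deriv a s" and "q = deriv b s" and "r1 = deriv r s"
    and "p2 = deriv (deriv a) s" and "q2 = deriv (deriv b) s" and "r2 = deriv (deriv r) s"
    and "c = cos t" and "y = sin t"
  have unit: "c^2 + y^2 = 1" by (simp add: c_def y_def)
  have "orient * ((r s)^2 * circle_poly (r s) r1 r2 p q p2 q2 al be ga c y) = 0"
    using eq[folded p_def q_def r1_def p2_def q2_def r2_def c_def y_def] orient_sq unit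
    unfolding circle_poly_def by algebra
  then show ?thesis using r_nz orient_sq
    by (auto simp: al_def be_def ga_def p_def q_def r1_def p2_def q2_def r2_def c_def y_def)
qed

lemma trig_identity_continuation:
  fixes F :: "real \<Rightarrow> real \<Rightarrow> real" and G :: "complex \<Rightarrow> complex \<Rightarrow> complex"
  assumes hol: "(\<lambda>z. G (cos z) (sin z)) holomorphic_on UNIV"
    and extends: "\<And>x y. G (of_real x) (of_real y) = of_real (F x y)"
    and t01: "t0 < t1" and zero: "\<forall>t\<in>{t0<..<t1}. F (cos t) (sin t) = 0"
  shows "F (cos t) (sin t) = 0"
proof -
  define \<xi> where "\<xi> = (t0 + t1) / 2"
  have limit_point: "complex_of_real \<xi> islimpt (complex_of_real ` {t0<..<t1})"
  proof (rule islimpt_approachable[THEN iffD2], intro allI impI)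
    fix e :: real assume e: "0 < e"
    define d where "d = min (e/2) ((t1 - t0)/4)"
    have d: "0 < d" "d < e" "d < (t1-t0)/2" using e t01 unfolding d_def by (auto simp: min_def)
    have mem: "\<xi> + d \<in> {t0<..<t1}" using d t01 unfolding \<xi>_def by (auto simp: field_simps)
    show "\<exists>x'\<in>complex_of_real ` {t0<..<t1}. x' \<noteq> complex_of_real \<xi> \<and> dist x' (complex_of_real \<xi>) < e"
    proof (intro bexI conjI)
      show "complex_of_real (\<xi> + d) \<noteq> complex_of_real \<xi>" using d by simp
      show "dist (complex_of_real (\<xi> + d)) (complex_of_real \<xi>) < e"
        using d by (simp add: dist_norm flip: of_real_diff)
      show "complex_of_real (\<xi> + d) \<in> complex_of_real ` {t0<..<t1}" using mem by blast
    qed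
  qed
  have "G (cos (complex_of_real t)) (sin (complex_of_real t)) = 0"
  proof (rule analytic_continuation[OF hol open_UNIV connected_UNIV _ _ limit_point])
    fix z assume "z \<in> complex_of_real ` {t0<..<t1}"
    then obtain x where "x \<in> {t0<..<t1}" "z = of_real x" by auto
    then show "G (cos z) (sin z) = 0" using zero extends by (simp add: cos_of_real sin_of_real)
  qed auto
  then show ?thesis using extends by (simp add: cos_of_real sin_of_real)
qed

text \<open>If the circle polynomial vanishes on the whole unit circle and the centre moves
  (p, q not both zero), its coefficients satisfy four relations; we evaluate at the eight
  points (\<plusminus>1,0), (0,\<plusminus>1), (\<plusminus>h,\<plusminus>h) with h = 1/sqrt 2 and eliminate.\<close>
lemma circle_poly_moving_centre:
  fixes r r1 r2 p q p2 q2 al be ga :: real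
  assumes r: "r > 0" and pq: "p^2 + q^2 \<noteq> 0"
    and zero: "\<And>c y. c^2 + y^2 = 1 \<Longrightarrow> circle_poly r r1 r2 p q p2 q2 al be ga c y = 0"
  shows "al = ga*p \<and> be = ga*q \<and> ga*r1 = 0 \<and> 1 + p^2 + q^2 + r1^2 - r*r2 = 0"
proof -
  define h :: real where "h = sqrt 2 / 2"
  have h: "h*h = 1/2" by (simp add: h_def)
  have hh: "h^2 + h^2 = 1" "(-h)^2 + (-h)^2 = 1" "h^2 + (-h)^2 = 1" "(-h)^2 + h^2 = 1"
    using h by (simp_all add: power2_eq_square)
  let ?P = "circle_poly r r1 r2 p q p2 q2 al be ga"
  have E1: "?P 1 0 = 0" and E2: "?P (-1) 0 = 0" and E3: "?P 0 1 = 0" and E4: "?P 0 (-1) = 0"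
    by (rule zero; simp)+
  have E5: "?P h h = 0" and E6: "?P (-h) (-h) = 0" and E7: "?P h (-h) = 0" and E8: "?P (-h) h = 0"
    using zero[OF hh(1)] zero[OF hh(2)] zero[OF hh(3)] zero[OF hh(4)] by auto
  define m where "m = ga*p - al"
  define n where "n = ga*q - be"
  have "r*(2*(p^2*m+q^2*n) - (p+q)^2*(m+n))
     = 2*h*(?P h h - ?P (-h) (-h) - h*(?P 1 0 - ?P (-1) 0) - h*(?P 0 1 - ?P 0 (-1)))"
    using h unfolding circle_poly_def m_def n_def by algebra
  then have a1: "2*(p^2*m+q^2*n) - (p+q)^2*(m+n) = 0" using E1 E2 E3 E4 E5 E6 r by simp
  have "r*(2*(p^2*m-q^2*n) - (p-q)^2*(m-n))
     = 2*h*(?P h (-h) - ?P (-h) h - h*(?P 1 0 - ?P (-1) 0) + h*(?P 0 1 - ?P 0 (-1)))"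
    using h unfolding circle_poly_def m_def n_def by algebra
  then have a2: "2*(p^2*m-q^2*n) - (p-q)^2*(m-n) = 0" using E1 E2 E3 E4 E7 E8 r by simp
  have "(p^2+q^2)^2 * m = 0" and "(p^2+q^2)^2 * n = 0" using a1 a2 by algebra+
  then have "m = 0" and "n = 0" using pq by auto
  then have al: "al = ga*p" and be: "be = ga*q" by (simp_all add: m_def n_def)
  have "(?P 1 0 + ?P (-1) 0) - (?P 0 1 + ?P 0 (-1)) = -2*r*(ga*r1)*(p^2-q^2)"
    unfolding circle_poly_def al be by algebra
  then have d1: "ga*r1*(p^2-q^2) = 0" using E1 E2 E3 E4 r by simp
  have "(?P h h + ?P (-h) (-h)) - (?P h (-h) + ?P (-h) h) = -4*r*(ga*r1)*(p*q)"
    using h unfolding circle_poly_def al be by algebra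
  then have d2: "ga*r1*(p*q) = 0" using E5 E6 E7 E8 r by simp
  have "ga*r1*(p^2+q^2)^2 = 0" using d1 d2 by algebra
  then have g0: "ga*r1 = 0" using pq by auto
  have "?P 1 0 + ?P (-1) 0 = 2*(1 + p^2 + q^2 + r1^2 - r*r2) - 2*r*(ga*r1)*(1+r1^2+p^2)"
    unfolding circle_poly_def al be by algebra
  then have "1 + p^2 + q^2 + r1^2 - r*r2 = 0" using E1 E2 g0 by simp
  then show ?thesis using al be g0 by simp
qed

lemma circle_poly_resting_centre:
  fixes r r1 r2 al be ga :: real
  assumes r: "r > 0" and zero: "\<And>c y. c^2 + y^2 = 1 \<Longrightarrow> circle_poly r r1 r2 0 0 0 0 al be ga c y = 0"
  shows "al = 0 \<and> be = 0"
proof -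
  let ?P = "circle_poly r r1 r2 0 0 0 0 al be ga"
  have "?P 1 0 - ?P (-1) 0 = 2*r*(1+r1^2)*al" and "?P 0 1 - ?P 0 (-1) = 2*r*(1+r1^2)*be"
    unfolding circle_poly_def by algebra+
  moreover have "?P 1 0 = 0" "?P (-1) 0 = 0" "?P 0 1 = 0" "?P 0 (-1) = 0" by (rule zero; simp)+
  moreover have "1 + r1^2 > 0" by (metis add_pos_nonneg zero_less_one zero_le_power2)
  then have "r*(1+r1^2) \<noteq> 0" using r by simp
  ultimately show ?thesis by simp
qed

lemma deriv_zero_if_eventually_zero:
  fixes f :: "real \<Rightarrow> real"
  assumes "eventually (\<lambda>\<sigma>. f \<sigma> = 0) (nhds s)" "(f has_real_derivative D) (at s)"
  shows "D = 0"
proof -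
  have "((\<lambda>_. 0::real) has_real_derivative D) (at s)"
    using assms(2) DERIV_cong_ev[OF refl assms(1) refl] by simp
  then show ?thesis using DERIV_const DERIV_unique by blast
qed

lemma (in orthonormal_frame) circle_surface_revolution:
  assumes centre: "\<forall>s\<in>I. a s = A \<and> b s = B" and r_nonneg: "\<forall>s\<in>I. r s \<ge> 0" and g: "g \<noteq> 0"
  shows "surface_of_revolution (circle_surface e1 e2 e3 a b r) I J (A *\<^sub>R e1 + B *\<^sub>R e2) (g *\<^sub>R e3)"
  unfolding surface_of_revolution_def
proof (intro conjI ballI exI allI)
  show "g *\<^sub>R e3 \<noteq> 0" using g n3 by auto
  fix s t assume s: "s \<in> I"
  let ?c = "A *\<^sub>R e1 + B *\<^sub>R e2 + (s / g) *\<^sub>R (g *\<^sub>R e3)"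
  have radial: "circle_surface e1 e2 e3 a b r s t - ?c = fv (r s * cos t) (r s * sin t) 0"
    using centre s g by (simp add: circle_surface_def frame_vec_def algebra_simps)
  show "(circle_surface e1 e2 e3 a b r s t - ?c) \<bullet> (g *\<^sub>R e3) = 0"
    unfolding radial by (simp add: frame_vec_def inner_add_left o13 o23)
  have "norm (fv (r s * cos t) (r s * sin t) 0) = sqrt ((r s)^2 * ((sin t)^2 + (cos t)^2))"
    unfolding frame_norm by (rule arg_cong[where f=sqrt]) algebra
  also have "\<dots> = r s" using r_nonneg s by simp
  finally show "norm (circle_surface e1 e2 e3 a b r s t - ?c) = r s" unfolding radial .
qed

locale phi_minimal_circle_surface = orthonormal_frame +
  fixes a b r :: "real \<Rightarrow> real" and s0 s1 t0 t1 :: real and v :: "real^3"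
  assumes intervals: "s0 < s1" "t0 < t1"
    and smooth: "smooth_on {s0<..<s1} a" "smooth_on {s0<..<s1} b" "smooth_on {s0<..<s1} r"
    and r_pos: "\<forall>s\<in>{s0<..<s1}. r s > 0"
    and regular: "regular_param (circle_surface e1 e2 e3 a b r) {s0<..<s1} {t0<..<t1}"
    and minimal: "phi_minimal v (circle_surface e1 e2 e3 a b r) {s0<..<s1} {t0<..<t1}"
    and v_nz: "v \<noteq> 0"
begin

abbreviation "I \<equiv> {s0<..<s1}"

text \<open>On each circle the minimality equation holds on an arc, hence (by analytic
  continuation in t) on the whole unit circle.\<close>
lemma circle_poly_on_unit_circle:
  assumes s: "s \<in> I" and unit: "c^2 + y^2 = 1"
  shows "circle_poly (r s) (deriv r s) (deriv (deriv r) s) (deriv a s) (deriv b s)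
           (deriv (deriv a) s) (deriv (deriv b) s) (v \<bullet> e1) (v \<bullet> e2) (v \<bullet> e3) c y = 0"
proof -
  let ?P = "circle_poly (r s) (deriv r s) (deriv (deriv r) s) (deriv a s) (deriv b s)
           (deriv (deriv a) s) (deriv (deriv b) s) (v \<bullet> e1) (v \<bullet> e2) (v \<bullet> e3)"
  let ?Q = "circle_poly (of_real (r s)) (of_real (deriv r s)) (of_real (deriv (deriv r) s))
    (of_real (deriv a s)) (of_real (deriv b s)) (of_real (deriv (deriv a) s)) (of_real (deriv (deriv b) s))
    (of_real (v \<bullet> e1)) (of_real (v \<bullet> e2)) (of_real (v \<bullet> e3)) :: complex \<Rightarrow> complex \<Rightarrow> complex"
  have on_arc: "\<forall>t\<in>{t0<..<t1}. ?P (cos t) (sin t) = 0"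
  proof
    fix t assume t: "t \<in> {t0<..<t1}"
    show "?P (cos t) (sin t) = 0"
    proof (rule circle_surface_phi_minimal_poly[OF _ smooth s])
      have "r s > 0" using r_pos s by blast
      then show "r s \<noteq> 0" by simp
      show "Xs (circle_surface e1 e2 e3 a b r) s t \<times> Xt (circle_surface e1 e2 e3 a b r) s t \<noteq> 0"
        using regular s t by (simp add: regular_param_def)
      show "phi_mean_curv v (circle_surface e1 e2 e3 a b r) s t = 0"
        using minimal s t by (simp add: phi_minimal_def)
    qed simp
  qed
  have everywhere: "?P (cos t) (sin t) = 0" for t
  proof (rule trig_identity_continuation[OF _ _ intervals(2) on_arc])
    show "(\<lambda>z. ?Q (cos z) (sin z)) holomorphic_on UNIV"
      unfolding circle_poly_def by (intro holomorphic_intros)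
    show "?Q (of_real x) (of_real y) = of_real (?P x y)" for x y
      unfolding circle_poly_def by simp
  qed
  obtain t where "c = cos t" "y = sin t" using sincos_total_2pi[OF unit] by metis
  then show ?thesis using everywhere by simp
qed

text \<open>The centre of the circles does not move: otherwise, near a parameter where it
  moves, the coefficient relations force r' = 0 identically, hence r'' = 0, which is
  incompatible with 1 + a'^2 + b'^2 + r'^2 = r r''.\<close>
lemma centre_velocity_zero:
  assumes s: "s \<in> I"
  shows "deriv a s = 0 \<and> deriv b s = 0"
proof (rule ccontr)
  let ?speed = "\<lambda>\<sigma>. (deriv a \<sigma>)^2 + (deriv b \<sigma>)^2"
  assume "\<not> (deriv a s = 0 \<and> deriv b s = 0)"
  then have moving: "?speed s > 0" by (auto simp: add_pos_nonneg add_nonneg_pos)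
  have relations: "v \<bullet> e1 = (v \<bullet> e3) * deriv a \<sigma> \<and> v \<bullet> e2 = (v \<bullet> e3) * deriv b \<sigma>
      \<and> (v \<bullet> e3) * deriv r \<sigma> = 0
      \<and> 1 + (deriv a \<sigma>)^2 + (deriv b \<sigma>)^2 + (deriv r \<sigma>)^2 - r \<sigma> * deriv (deriv r) \<sigma> = 0"
    if "\<sigma> \<in> I" "?speed \<sigma> > 0" for \<sigma>
  proof -
    have "r \<sigma> > 0" using r_pos that(1) by blast
    then show ?thesis
      by (rule circle_poly_moving_centre) (use that circle_poly_on_unit_circle in auto)
  qed
  have "v = fv (v \<bullet> e1) (v \<bullet> e2) (v \<bullet> e3)" by (rule frame_expansion)
  then have ga: "v \<bullet> e3 \<noteq> 0" using relations[OF s moving] v_nz by (auto simp: frame_vec_def)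
  have "isCont (deriv a) s" "isCont (deriv b) s"
    using smooth_on_deriv(2)[OF smooth(1) s] smooth_on_deriv(2)[OF smooth(2) s] by (auto intro: DERIV_isCont)
  then have "isCont ?speed s" by (intro continuous_intros)
  then have "eventually (\<lambda>\<sigma>. ?speed \<sigma> > 0) (at s)"
    using order_tendstoD(1)[OF _ moving] unfolding isCont_def by blast
  then have "eventually (\<lambda>\<sigma>. ?speed \<sigma> > 0) (nhds s)"
    using moving by (simp add: eventually_nhds_conv_at)
  moreover have "eventually (\<lambda>\<sigma>. \<sigma> \<in> I) (nhds s)" using s by (intro eventually_nhds_in_open) auto
  ultimately have "eventually (\<lambda>\<sigma>. deriv r \<sigma> = 0) (nhds s)"
    by eventually_elim (use relations ga in auto)
  then have "deriv (deriv r) s = 0"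
    using deriv_zero_if_eventually_zero smooth_on_deriv(2)[OF smooth(3) s] by blast
  moreover have "deriv r s = 0" using relations[OF s moving] ga by simp
  ultimately have "1 + ?speed s = 0" using relations[OF s moving] by simp
  then show False using moving by simp
qed

text \<open>Consequently the density vector is orthogonal to the planes of the circles: at a
  parameter where the centre is at rest to second order, the resting-centre relations apply.\<close>
lemma density_normal_to_planes: "v \<bullet> e1 = 0 \<and> v \<bullet> e2 = 0"
proof -
  define m where "m = (s0 + s1) / 2"
  have m: "m \<in> I" using intervals(1) by (simp add: m_def field_simps)
  have near_m: "eventually (\<lambda>\<sigma>. \<sigma> \<in> I) (nhds m)" using m by (intro eventually_nhds_in_open) auto
  have "eventually (\<lambda>\<sigma>. deriv a \<sigma> = 0) (nhds m)"
    using near_m by eventually_elim (simp add: centre_velocity_zero)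
  then have a2: "deriv (deriv a) m = 0"
    by (rule deriv_zero_if_eventually_zero[OF _ smooth_on_deriv(2)[OF smooth(1) m]])
  have "eventually (\<lambda>\<sigma>. deriv b \<sigma> = 0) (nhds m)"
    using near_m by eventually_elim (simp add: centre_velocity_zero)
  then have b2: "deriv (deriv b) m = 0"
    by (rule deriv_zero_if_eventually_zero[OF _ smooth_on_deriv(2)[OF smooth(2) m]])
  have pos: "r m > 0" using r_pos m by blast
  show ?thesis
  proof (rule circle_poly_resting_centre[OF pos])
    fix c y :: real assume "c^2 + y^2 = 1"
    then show "circle_poly (r m) (deriv r m) (deriv (deriv r) m) 0 0 0 0 (v \<bullet> e1) (v \<bullet> e2) (v \<bullet> e3) c y = 0"
      using circle_poly_on_unit_circle[OF m] centre_velocity_zero[OF m] a2 b2 by metis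
  qed
qed

lemma centre_constant: "\<exists>A B. \<forall>s\<in>I. a s = A \<and> b s = B"
proof -
  have zero_deriv_const: "\<exists>A. \<forall>s\<in>I. f s = A"
    if sm: "smooth_on I f" and still: "\<And>s. s \<in> I \<Longrightarrow> deriv f s = 0" for f
  proof (rule has_field_derivative_zero_constant)
    fix s assume s: "s \<in> I"
    show "(f has_field_derivative 0) (at s within I)"
      using smooth_on_deriv(1)[OF sm s] still[OF s] by (simp add: has_field_derivative_at_within)
  qed simp
  obtain A where "\<forall>s\<in>I. a s = A" using zero_deriv_const[OF smooth(1)] centre_velocity_zero by blast
  moreover obtain B where "\<forall>s\<in>I. b s = B" using zero_deriv_const[OF smooth(2)] centre_velocity_zero by blast
  ultimately show ?thesis by blast
qed

end

lemma orthonormal_frame_unit_normal: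
  fixes e1 e2 w :: "real^3"
  assumes "w \<noteq> 0" "norm e1 = 1" "norm e2 = 1" "e1 \<bullet> e2 = 0" "e1 \<bullet> w = 0" "e2 \<bullet> w = 0"
  shows "orthonormal_frame e1 e2 ((1 / norm w) *\<^sub>R w)"
proof
  show "e1 \<bullet> e1 = 1" "e2 \<bullet> e2 = 1" using assms(2,3) by (simp_all add: norm_eq_1)
  show "(1 / norm w) *\<^sub>R w \<bullet> (1 / norm w) *\<^sub>R w = 1"
    using assms(1) by (simp add: power2_norm_eq_inner[symmetric] power2_eq_square)
qed (use assms in simp_all)

lemma riemann_param_eq_circle_surface:
  "riemann_param w e1 e2 a b r = circle_surface e1 e2 ((1 / norm w) *\<^sub>R w) a b r"
  by (simp add: fun_eq_iff riemann_param_def circle_surface_def frame_vec_def algebra_simps)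

theorem theorem2:
  fixes v w e1 e2 :: "real^3" and a b r :: "real \<Rightarrow> real" and s0 s1 t0 t1 :: real
  assumes v_nz: "v \<noteq> 0"
    and w_nz: "w \<noteq> 0"
    and frame: "norm e1 = 1" "norm e2 = 1" "e1 \<bullet> e2 = 0" "e1 \<bullet> w = 0" "e2 \<bullet> w = 0"
    and intervals: "s0 < s1" "t0 < t1"
    and smooth: "smooth_on {s0<..<s1} a" "smooth_on {s0<..<s1} b" "smooth_on {s0<..<s1} r"
    and r_pos: "\<forall>s\<in>{s0<..<s1}. r s > 0"
    and regular: "regular_param (riemann_param w e1 e2 a b r) {s0<..<s1} {t0<..<t1}"
    and minimal: "phi_minimal v (riemann_param w e1 e2 a b r) {s0<..<s1} {t0<..<t1}"
  shows "(\<exists>k. w = k *\<^sub>R v) \<and>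
         (\<exists>p. surface_of_revolution (riemann_param w e1 e2 a b r) {s0<..<s1} {t0<..<t1} p v)"
proof -
  define n where "n = (1 / norm w) *\<^sub>R w"
  interpret phi_minimal_circle_surface e1 e2 n a b r s0 s1 t0 t1 v
    unfolding phi_minimal_circle_surface_def phi_minimal_circle_surface_axioms_def n_def
    using orthonormal_frame_unit_normal[OF w_nz frame] intervals smooth r_pos regular minimal v_nz
    by (simp add: riemann_param_eq_circle_surface)
  have v_axis: "v = (v \<bullet> n) *\<^sub>R n"
    using frame_expansion[of v] density_normal_to_planes by (simp add: frame_vec_def)
  then have axial: "v \<bullet> n \<noteq> 0" using v_nz by auto
  have "w = (norm w / (v \<bullet> n)) *\<^sub>R v"
    using axial w_nz by (subst v_axis) (simp add: n_def)
  moreover obtain A B where "\<forall>s\<in>{s0<..<s1}. a s = A \<and> b s = B" using centre_constant by blast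
  then have "surface_of_revolution (riemann_param w e1 e2 a b r) {s0<..<s1} {t0<..<t1} (A *\<^sub>R e1 + B *\<^sub>R e2) v"
    using circle_surface_revolution[OF _ _ axial] r_pos v_axis
    by (simp add: riemann_param_eq_circle_surface n_def less_imp_le)
  ultimately show ?thesis by blast
qed

end
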